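(* For an algebraic range-query function $Q$, given an array of size $n$, Bin Buffering uses a buffer of $n/b$ tuples computed in time $O(n)$ and updated in time $O(b)$ to support queries in time $O(n/b+b)$. Choosing $b=\sqrt{n}$ minimizes the query complexity to $O(\sqrt{n})$. If $Q$ is linear then updates take constant time.
   Context: Arrays are indexed $a_0,\ldots,a_{n-1}$. A range-query function $Q:\mathcal{A}^{R}\to R$ (where $\mathcal{A}^R$ is the set of finite arrays with values in $R$) is distributive if there is $F$ with $Q(a_0,\ldots,a_k,a_{k+1},\ldots,a_{n-1})=F(Q(a_0,\ldots,a_k),Q(a_{k+1},\ldots,a_{n-1}))$ for all $0\le k<n-1$. A real-valued range-query function $Q$ is algebraic if it can be computed from an intermediate tuple-valued distributive range-query function $G:\mathcal{A}^{\mathbb{R}}\to\mathbb{R}^m$ ($m$ a small fixed integer) with combining function $F:\mathcal{A}^{\mathbb{R}^m}\to\mathbb{R}^m$, i.e. $G(a_0,\ldots,a_k,a_{k+1},\ldots,a_{n-1})=F(G(a_0,\ldots,a_k),G(a_{k+1},\ldots,a_{n-1}))$; the cost of $G$ and $F$ is assumed independent of the values and constant per combination. Bin Buffering: given an integer $b$ dividing $n$, precompute the $n/b$ components $B_0=G(a_0,\ldots,a_{b-1})$, $B_1=G(a_b,\ldots,a_{2b-1})$, $\ldots$, $B_{n/b-1}=G(a_{n-b},\ldots,a_{n-1})$, and answer queries via $G(a_k,\ldots,a_l)=F(G(a_k,\ldots,a_{b\lceil k/b\rceil-1}),B_{\lceil k/b\rceil},\ldots,B_{\lfloor l/b\rfloor-1},G(a_{b\lfloor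 l/b\rfloor},\ldots,a_l))$. An update changes one array entry $a_k$ by $\Delta=a'_k-a_k$. $Q$ (with intermediate $G$) is linear if $G(a_0+\alpha d_0,\ldots,a_{n-1}+\alpha d_{n-1})=G(a_0,\ldots,a_{n-1})+\alpha G(d_0,\ldots,d_{n-1})$ for all arrays $a,d$ and constants $\alpha$. *)

theory Defs
  imports "HOL-Analysis.Analysis"
begin

definition seg :: "'r list \<Rightarrow> nat \<Rightarrow> nat \<Rightarrow> 'r list" where
  "seg a i j = take (j - i) (drop i a)"

definition distributive_rq :: "('r list \<Rightarrow> 'b) \<Rightarrow> ('b \<Rightarrow> 'b \<Rightarrow> 'b) \<Rightarrow> bool" where
  "distributive_rq G F \<longleftrightarrow>
     (\<forall>xs ys. xs \<noteq> [] \<longrightarrow> ys \<noteq> [] \<longrightarrow> G (xs @ ys) = F (G xs) (G ys))"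

definition linear_rq :: "(real list \<Rightarrow> 'b::real_vector) \<Rightarrow> bool" where
  "linear_rq G \<longleftrightarrow>
     (\<forall>a d (\<alpha>::real). length a = length d \<longrightarrow>
        G (map2 (\<lambda>x y. x + \<alpha> * y) a d) = G a + \<alpha> *\<^sub>R G d)"

text \<open>Cost model: every algorithm returns (result, cost) where the cost counts
  the primitive operations: evaluations of G on a single entry, applications of F,
  and (in the linear update) one vector addition.\<close>

fun gfold :: "('r list \<Rightarrow> 'b) \<Rightarrow> ('b \<Rightarrow> 'b \<Rightarrow> 'b) \<Rightarrow> 'r \<Rightarrow> 'r list \<Rightarrow> 'b \<times> nat" where
  "gfold G F x [] = (G [x], 1)"
| "gfold G F x (y # ys) = (case gfold G F y ys of (v, c) \<Rightarrow> (F (G [x]) v, c + 2))"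

definition evalseq :: "('r list \<Rightarrow> 'b) \<Rightarrow> ('b \<Rightarrow> 'b \<Rightarrow> 'b) \<Rightarrow> 'r list \<Rightarrow> 'b \<times> nat" where
  "evalseq G F xs = (case xs of [] \<Rightarrow> (G [], 0) | x # ys \<Rightarrow> gfold G F x ys)"

fun fcomb :: "('b \<Rightarrow> 'b \<Rightarrow> 'b) \<Rightarrow> 'b \<Rightarrow> 'b list \<Rightarrow> 'b \<times> nat" where
  "fcomb F v [] = (v, 0)"
| "fcomb F v (w # ws) = (case fcomb F w ws of (r, c) \<Rightarrow> (F v r, c + 1))"

definition is_buffer :: "('r list \<Rightarrow> 'b) \<Rightarrow> nat \<Rightarrow> 'r list \<Rightarrow> 'b list \<Rightarrow> bool" where
  "is_buffer G b a B \<longleftrightarrow> length B = length a div b \<and>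
     (\<forall>j < length B. B ! j = G (seg a (j * b) (j * b + b)))"

definition build_buffer :: "('r list \<Rightarrow> 'b) \<Rightarrow> ('b \<Rightarrow> 'b \<Rightarrow> 'b) \<Rightarrow> nat \<Rightarrow> 'r list \<Rightarrow> 'b list \<times> nat" where
  "build_buffer G F b a =
     (let blk = (\<lambda>j. evalseq G F (seg a (j * b) (j * b + b)));
          js = [0..<length a div b]
      in (map (\<lambda>j. fst (blk j)) js, sum_list (map (\<lambda>j. snd (blk j)) js)))"

text \<open>Query G(a_k,...,a_l) using the buffer, following
  G(a_k..a_l) = F(G(a_k..a_(b*ceil(k/b)-1)), B_(ceil(k/b)),...,B_(floor(l/b)-1), G(a_(b*floor(l/b))..a_l)),
  omitting empty pieces; if k and l lie strictly inside the same bin, G is computed directly.\<close>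
definition bb_query :: "('r list \<Rightarrow> 'b) \<Rightarrow> ('b \<Rightarrow> 'b \<Rightarrow> 'b) \<Rightarrow> nat \<Rightarrow> 'r list \<Rightarrow> 'b list
    \<Rightarrow> nat \<Rightarrow> nat \<Rightarrow> 'b \<times> nat" where
  "bb_query G F b a B k l =
     (let p = b * ((k + b - 1) div b); q = b * (l div b) in
      if q < p then evalseq G F (seg a k (Suc l))
      else
        (case evalseq G F (seg a q (Suc l)) of (sv, sc) \<Rightarrow>
          (let mids = map (\<lambda>i. B ! i) [p div b..<q div b] in
           (case fcomb F (hd (mids @ [sv])) (tl (mids @ [sv])) of (r, cr) \<Rightarrow>
             (if k < p then
                (case evalseq G F (seg a k p) of (pv, pc) \<Rightarrow> (F pv r, pc + sc + cr + 1))
              else (r, sc + cr))))))"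

definition bb_update :: "('r list \<Rightarrow> 'b) \<Rightarrow> ('b \<Rightarrow> 'b \<Rightarrow> 'b) \<Rightarrow> nat \<Rightarrow> 'r list \<Rightarrow> 'b list
    \<Rightarrow> nat \<Rightarrow> 'r \<Rightarrow> 'b list \<times> nat" where
  "bb_update G F b a B k x =
     (let j = k div b in
      case evalseq G F (seg (a[k := x]) (j * b) (j * b + b)) of (v, c) \<Rightarrow> (B[j := v], c))"

text \<open>Update for linear G: B_j := B_j + G(0,..,0,\<Delta>,0,..,0), where the correction is
  computed as F(F(G(0..0), G[\<Delta>]), G(0..0)) using G(0..0) = 0 (a consequence of linearity).\<close>
definition bb_lin_update :: "(real list \<Rightarrow> 'b::real_vector) \<Rightarrow> ('b \<Rightarrow> 'b \<Rightarrow> 'b) \<Rightarrow> nat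
    \<Rightarrow> real list \<Rightarrow> 'b list \<Rightarrow> nat \<Rightarrow> real \<Rightarrow> 'b list \<times> nat" where
  "bb_lin_update G F b a B k x =
     (let j = k div b; i = k mod b; \<Delta> = x - a ! k;
          v0 = G [\<Delta>];
          v1 = (if 0 < i then F 0 v0 else v0);
          v2 = (if i < b - 1 then F v1 0 else v1)
      in (B[j := B ! j + v2],
          1 + (if 0 < i then 1 else 0) + (if i < b - 1 then 1 else 0) + 1))"

end

theory Submission
  imports Defs
begin

text \<open>
  With p = b * ceil(k/b) and q = b * floor(l/b), the range a_k..a_l splits into the partial
  bin a_k..a_(p-1) and the tail a_q..a_l, each shorter than b, and the complete bins between
  p and q, at most n/b of them, whose G-values are read off the buffer; distributivity
  reassembles G of the whole range from these pieces, so a query costs O(n/b + b). An update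
  changes a single bin, which is recomputed in O(b). If G is linear, the new bin is the old
  one plus a block that vanishes except for \<Delta> at position k, and G vanishes on zero
  blocks, so the buffer entry only needs the correction F(F(0, G[\<Delta>]), 0).
  Finally n/b + b \<ge> 2 sqrt n by AM-GM, with equality at b = sqrt n.
\<close>

lemma length_seg: "length (seg a i j) = min (j - i) (length a - i)"
  by (simp add: seg_def)

lemma seg_eq_Nil_iff: "seg a i j = [] \<longleftrightarrow> j \<le> i \<or> length a \<le> i"
  by (auto simp: seg_def)

lemma seg_append: "i \<le> j \<Longrightarrow> j \<le> k \<Longrightarrow> seg a i j @ seg a j k = seg a i k"
  using take_add[of "j - i" "k - j" "drop i a"] by (simp add: seg_def)

lemma concat_map_seg_bins:
  "concat (map (\<lambda>i. seg a (i * b) (i * b + b)) [u..<v]) = seg a (u * b) (v * b)"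
proof (induction v)
  case 0
  then show ?case by (simp add: seg_def)
next
  case (Suc v)
  show ?case
  proof (cases "u \<le> v")
    case True
    then have "seg a (u * b) (v * b) @ seg a (v * b) (v * b + b) = seg a (u * b) (Suc v * b)"
      by (subst seg_append) (auto simp: mult_le_mono1 add.commute)
    then show ?thesis using Suc True by simp
  next
    case False
    then have "Suc v * b \<le> u * b" by (intro mult_le_mono1) simp
    then show ?thesis using False by (simp add: seg_def)
  qed
qed

lemma seg_list_update_outside: "k < i \<or> j \<le> k \<Longrightarrow> seg (a[k := x]) i j = seg a i j"
  by (rule nth_equalityI) (auto simp: seg_def nth_list_update)

lemma seg_list_update_eq_add:
  fixes a :: "'a::ab_group_add list"
  assumes "i \<le> k" "k < j" "j \<le> length a"
  shows "seg (a[k := x]) i j =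
    map2 (+) (seg a i j) (replicate (k - i) 0 @ [x - a ! k] @ replicate (j - Suc k) 0)"
  using assms by (intro nth_equalityI) (auto simp: seg_def nth_list_update nth_append)

lemma distributive_rq_seg:
  assumes "distributive_rq G F" "i < j" "j < k" "k \<le> length a"
  shows "G (seg a i k) = F (G (seg a i j)) (G (seg a j k))"
  using assms seg_append[of i j k a] unfolding distributive_rq_def
  by (metis less_imp_le_nat order.strict_trans2 seg_eq_Nil_iff not_le)

lemma fst_gfold: "distributive_rq G F \<Longrightarrow> fst (gfold G F x ys) = G (x # ys)"
proof (induction ys arbitrary: x)
  case Nil
  then show ?case by simp
next
  case (Cons y ys)
  then have "G ([x] @ y # ys) = F (G [x]) (G (y # ys))" unfolding distributive_rq_def by blast
  with Cons show ?case by (simp add: split_beta)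
qed

lemma snd_gfold: "snd (gfold G F x ys) = 2 * length ys + 1"
  by (induction ys arbitrary: x) (auto simp: split_beta)

lemma fst_evalseq: "distributive_rq G F \<Longrightarrow> fst (evalseq G F xs) = G xs"
  by (cases xs) (auto simp: evalseq_def fst_gfold)

lemma snd_evalseq_seg_le: "snd (evalseq G F (seg a i j)) \<le> 2 * (j - i)"
proof -
  have "snd (evalseq G F xs) \<le> 2 * length xs" for xs
    by (cases xs) (auto simp: evalseq_def snd_gfold)
  then show ?thesis by (metis length_seg min.bounded_iff mult_le_mono2 order.trans order.refl)
qed

lemma fst_fcomb_map:
  assumes dist: "distributive_rq G F" and "L \<noteq> []" "[] \<notin> set L"
  shows "fst (fcomb F (hd (map G L)) (tl (map G L))) = G (concat L)"
  using assms(2,3)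
proof (induction L)
  case Nil
  then show ?case by simp
next
  case (Cons x L)
  show ?case
  proof (cases "L = []")
    case True
    then show ?thesis by simp
  next
    case False
    with Cons.prems have "x \<noteq> []" "concat L \<noteq> []" by (cases L; auto)+
    with dist have "G (x @ concat L) = F (G x) (G (concat L))"
      unfolding distributive_rq_def by blast
    with Cons False show ?thesis by (cases L) (simp_all add: split_beta)
  qed
qed

lemma snd_fcomb: "snd (fcomb F v ws) = length ws"
  by (induction ws arbitrary: v) (auto simp: split_beta)

lemma round_up_bounds:
  fixes b k :: nat
  assumes "0 < b"
  shows "k \<le> b * ((k + b - 1) div b)" "b * ((k + b - 1) div b) < k + b"
  using dividend_less_times_div[OF assms, of "k + b - 1"] times_div_less_eq_dividend[of b "k + b - 1"]
    assms by linarith+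

lemma nth_buffer:
  "is_buffer G b a B \<Longrightarrow> j < length a div b \<Longrightarrow> B ! j = G (seg a (j * b) (j * b + b))"
  by (simp add: is_buffer_def)

lemma fst_build_buffer: "distributive_rq G F \<Longrightarrow> is_buffer G b a (fst (build_buffer G F b a))"
  by (simp add: is_buffer_def build_buffer_def Let_def fst_evalseq)

lemma length_build_buffer: "length (fst (build_buffer G F b a)) = length a div b"
  by (simp add: build_buffer_def Let_def)

lemma snd_build_buffer_le: "snd (build_buffer G F b a) \<le> 2 * length a"
proof -
  have "snd (build_buffer G F b a) \<le> (\<Sum>j\<leftarrow>[0..<length a div b]. 2 * b)"
    unfolding build_buffer_def Let_def snd_conv
    by (rule sum_list_mono) (metis snd_evalseq_seg_le add_diff_cancel_left')
  also have "\<dots> = 2 * (length a div b * b)" by (simp add: sum_list_triv)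
  also have "\<dots> \<le> 2 * length a" by simp
  finally show ?thesis .
qed

lemma fst_bb_query:
  assumes dist: "distributive_rq G F" and buf: "is_buffer G b a B"
    and "0 < b" "k \<le> l" "l < length a"
  shows "fst (bb_query G F b a B k l) = G (seg a k (Suc l))"
proof -
  define p where "p = b * ((k + b - 1) div b)"
  define q where "q = b * (l div b)"
  have p: "k \<le> p" "p < k + b" and q: "q \<le> l" "l < q + b"
    using round_up_bounds[OF \<open>0 < b\<close>, of k] dividend_less_times_div[OF \<open>0 < b\<close>, of l]
    by (simp_all add: p_def q_def)
  show ?thesis
  proof (cases "q < p")
    case True
    then show ?thesis
      unfolding bb_query_def Let_def p_def[symmetric] q_def[symmetric] by (simp add: fst_evalseq[OF dist])
  next
    case False
    define bins where "bins = map (\<lambda>i. seg a (i * b) (i * b + b)) [p div b..<q div b]"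
    have "q div b \<le> length a div b"
      using q \<open>l < length a\<close> by (simp add: div_le_mono q_def)
    then have "map ((!) B) [p div b..<q div b] = map G bins"
      by (auto simp: bins_def nth_buffer[OF buf])
    moreover have "[] \<notin> set (bins @ [seg a q (Suc l)])"
    proof -
      have "i * b + b \<le> q" if "i < q div b" for i
        using mult_le_mono1[of "Suc i" "q div b" b] that \<open>0 < b\<close> by (simp add: q_def mult.commute)
      then have bin_inside: "i * b < length a" if "i < q div b" for i
        using that q \<open>0 < b\<close> \<open>l < length a\<close> by fastforce
      with q \<open>l < length a\<close> show ?thesis
        by (auto simp: bins_def seg_eq_Nil_iff eq_commute[of "[]"] dest!: bin_inside)
    qed
    moreover have "concat (bins @ [seg a q (Suc l)]) = seg a p (Suc l)"
    proof -
      have "p div b * b = p" "q div b * b = q" using \<open>0 < b\<close> by (simp_all add: p_def q_def)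
      then have "concat (bins @ [seg a q (Suc l)]) = seg a p q @ seg a q (Suc l)"
        by (simp add: bins_def concat_map_seg_bins)
      also have "\<dots> = seg a p (Suc l)" using False q by (intro seg_append) auto
      finally show ?thesis .
    qed
    ultimately have middle: "fst (fcomb F (hd (map ((!) B) [p div b..<q div b] @ [G (seg a q (Suc l))]))
        (tl (map ((!) B) [p div b..<q div b] @ [G (seg a q (Suc l))]))) = G (seg a p (Suc l))"
      using fst_fcomb_map[OF dist, of "bins @ [seg a q (Suc l)]"] by simp
    have "k < p \<Longrightarrow> F (G (seg a k p)) (G (seg a p (Suc l))) = G (seg a k (Suc l))"
      using distributive_rq_seg[OF dist] False p q \<open>l < length a\<close> by simp
    with False middle p show ?thesis
      unfolding bb_query_def Let_def p_def[symmetric] q_def[symmetric]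
      by (auto simp: split_beta fst_evalseq[OF dist])
  qed
qed

lemma snd_bb_query_le:
  assumes "0 < b" "l < length a"
  shows "snd (bb_query G F b a B k l) \<le> 4 * b + 1 + length a div b"
proof -
  define p where "p = b * ((k + b - 1) div b)"
  define q where "q = b * (l div b)"
  have p: "k \<le> p" "p < k + b" and q: "q \<le> l" "l < q + b"
    using round_up_bounds[OF \<open>0 < b\<close>, of k] dividend_less_times_div[OF \<open>0 < b\<close>, of l]
    by (simp_all add: p_def q_def)
  have prefix: "snd (evalseq G F (seg a k p)) \<le> 2 * b"
    and suffix: "snd (evalseq G F (seg a q (Suc l))) \<le> 2 * b"
    using snd_evalseq_seg_le[of G F a k p] snd_evalseq_seg_le[of G F a q "Suc l"] p q by linarith+
  have middle: "snd (fcomb F (hd (map ((!) B) [p div b..<q div b] @ [v]))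
      (tl (map ((!) B) [p div b..<q div b] @ [v]))) \<le> length a div b" for v
    using div_le_mono[of l "length a" b] \<open>l < length a\<close> by (simp add: snd_fcomb q_def le_diff_conv)
  show ?thesis
  proof (cases "q < p")
    case True
    then have "q + b \<le> p"
      using mult_le_mono2[of "Suc (l div b)" "(k + b - 1) div b" b] by (simp add: p_def q_def)
    then have "Suc l - k \<le> b" using p q by linarith
    then show ?thesis using True snd_evalseq_seg_le[of G F a k "Suc l"]
      unfolding bb_query_def Let_def p_def[symmetric] q_def[symmetric] by simp
  next
    case False
    with prefix suffix middle[of "fst (evalseq G F (seg a q (Suc l)))"] show ?thesis
      unfolding bb_query_def Let_def p_def[symmetric] q_def[symmetric] by (auto simp: split_beta)
  qed
qed

lemma real_snd_bb_query_le:
  assumes "0 < b" "l < length a"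
  shows "real (snd (bb_query G F b a B k l)) \<le> 5 * (real (length a) / real b + real b)"
proof -
  have "real (snd (bb_query G F b a B k l)) \<le> 4 * real b + 1 + real (length a div b)"
    using snd_bb_query_le[OF assms, of G F B k] by linarith
  also have "\<dots> \<le> 4 * real b + 1 + real (length a) / real b"
    using of_nat_div_le_of_nat by simp
  also have "\<dots> \<le> 5 * (real (length a) / real b + real b)"
  proof -
    have "1 \<le> real b" "0 \<le> real (length a) / real b" using \<open>0 < b\<close> by simp_all
    then show ?thesis unfolding distrib_left by linarith
  qed
  finally show ?thesis .
qed

lemma is_buffer_list_update:
  assumes buf: "is_buffer G b a B"
  shows "is_buffer G b (a[k := x]) (B[k div b := G (seg (a[k := x]) (k div b * b) (k div b * b + b))])"
    (is "is_buffer G b ?a ?B")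
  unfolding is_buffer_def
proof (intro conjI allI impI)
  show "length ?B = length ?a div b"
    using buf by (simp add: is_buffer_def)
  fix i
  assume i: "i < length ?B"
  show "?B ! i = G (seg ?a (i * b) (i * b + b))"
  proof (cases "i = k div b")
    case True
    with i show ?thesis by simp
  next
    case False
    then have "\<not> (i * b \<le> k \<and> k < i * b + b)"
      using div_nat_eqI[of b i k] by (auto simp: mult.commute)
    then have "seg ?a (i * b) (i * b + b) = seg a (i * b) (i * b + b)"
      by (intro seg_list_update_outside) auto
    with False i buf show ?thesis by (simp add: is_buffer_def)
  qed
qed

lemma fst_bb_update:
  "distributive_rq G F \<Longrightarrow> is_buffer G b a B \<Longrightarrow>
    is_buffer G b (a[k := x]) (fst (bb_update G F b a B k x))"
  using is_buffer_list_update[of G b a B k x] by (simp add: bb_update_def Let_def split_beta fst_evalseq)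

lemma snd_bb_update_le: "snd (bb_update G F b a B k x) \<le> 2 * b"
  using snd_evalseq_seg_le[of G F "a[k := x]" "k div b * b" "k div b * b + b"]
  by (simp add: bb_update_def Let_def split_beta)

lemma linear_rq_add:
  assumes "linear_rq G" "length a = length d"
  shows "G (map2 (+) a d) = G a + G d"
proof -
  have "G (map2 (\<lambda>x y. x + 1 * y) a d) = G a + 1 *\<^sub>R G d"
    using assms unfolding linear_rq_def by blast
  then show ?thesis by simp
qed

lemma linear_rq_replicate_zero: "linear_rq G \<Longrightarrow> G (replicate m 0) = 0"
  using linear_rq_add[of G "replicate m 0" "replicate m 0"] by (simp add: zip_replicate)

lemma G_replicate_zero_append:
  assumes "distributive_rq G F" "linear_rq G" "xs \<noteq> []" "0 < i"
  shows "G (replicate i 0 @ xs) = F 0 (G xs)"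
  using assms linear_rq_replicate_zero[of G i] unfolding distributive_rq_def by simp

lemma G_append_replicate_zero:
  assumes "distributive_rq G F" "linear_rq G" "xs \<noteq> []" "0 < r"
  shows "G (xs @ replicate r 0) = F (G xs) 0"
  using assms linear_rq_replicate_zero[of G r] unfolding distributive_rq_def by simp

lemma bin_end_le:
  fixes b n k :: nat
  assumes "b dvd n" "k < n"
  shows "k div b * b + b \<le> n"
proof -
  from \<open>b dvd n\<close> obtain m where n: "n = b * m" by (rule dvdE)
  with \<open>k < n\<close> have "Suc (k div b) \<le> m"
    by (simp add: less_mult_imp_div_less mult.commute Suc_leI)
  then show ?thesis using n mult_le_mono1[of "Suc (k div b)" m b] by (simp add: mult.commute)
qed

lemma fst_bb_lin_update:
  fixes G :: "real list \<Rightarrow> 'b::real_vector"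
  assumes dist: "distributive_rq G F" and lin: "linear_rq G" and buf: "is_buffer G b a B"
    and "b dvd length a" "k < length a"
  shows "is_buffer G b (a[k := x]) (fst (bb_lin_update G F b a B k x))"
proof -
  define j where "j = k div b"
  define i where "i = k mod b"
  define D where "D = x - a ! k"
  define delta where "delta = replicate i 0 @ [D] @ replicate (b - Suc i) (0::real)"
  have "0 < b" using assms(4,5) by (auto intro: gr0I)
  then have k: "k = j * b + i" "i < b" by (simp_all add: i_def j_def)
  have bin: "j * b + b \<le> length a" using bin_end_le[OF assms(4,5)] by (simp add: j_def)
  have v1: "(if 0 < i then F 0 (G [D]) else G [D]) = G (replicate i 0 @ [D])"
    using G_replicate_zero_append[OF dist lin, of "[D]" i] by simp
  have v2: "(if i < b - 1 then F (G (replicate i 0 @ [D])) 0 else G (replicate i 0 @ [D])) = G delta"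
    using G_append_replicate_zero[OF dist lin, of "replicate i 0 @ [D]" "b - Suc i"] by (simp add: delta_def)
  have "seg (a[k := x]) (j * b) (j * b + b) = map2 (+) (seg a (j * b) (j * b + b)) delta"
    using seg_list_update_eq_add[of "j * b" k "j * b + b" a x] k bin by (simp add: delta_def D_def)
  moreover have "length (seg a (j * b) (j * b + b)) = length delta"
    using bin \<open>i < b\<close> by (simp add: length_seg delta_def)
  moreover have "B ! j = G (seg a (j * b) (j * b + b))"
  proof (rule nth_buffer[OF buf])
    have "Suc j \<le> length a div b"
      using bin \<open>0 < b\<close> by (simp add: less_eq_div_iff_mult_less_eq add.commute)
    then show "j < length a div b" by simp
  qed
  ultimately have "B ! j + G delta = G (seg (a[k := x]) (j * b) (j * b + b))"
    using linear_rq_add[OF lin] by simp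
  moreover have "fst (bb_lin_update G F b a B k x) = B[j := B ! j + G delta]"
    unfolding bb_lin_update_def Let_def j_def[symmetric] i_def[symmetric] D_def[symmetric] v1 v2 by simp
  ultimately show ?thesis using is_buffer_list_update[OF buf, of k x] by (simp add: j_def)
qed

lemma snd_bb_lin_update_le: "snd (bb_lin_update G F b a B k x) \<le> 4"
  by (simp add: bb_lin_update_def Let_def)

lemma two_mult_le_power2_divide_add:
  fixes x y :: real
  assumes "0 < y"
  shows "2 * x \<le> x\<^sup>2 / y + y"
proof -
  have "2 * x * y \<le> x\<^sup>2 + y\<^sup>2" using sum_squares_bound[of x y] by (simp add: power2_eq_square)
  with assms show ?thesis by (simp add: field_simps power2_eq_square)
qed

theorem lemma1:
  "\<exists>C_build C_query C_upd C_lin C_sqrt :: real.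
     (\<forall>(G :: real list \<Rightarrow> real ^ 'm) F (n::nat) (b::nat) a.
        distributive_rq G F \<and> 0 < b \<and> b dvd n \<and> length a = n \<longrightarrow>
          is_buffer G b a (fst (build_buffer G F b a))
        \<and> length (fst (build_buffer G F b a)) = n div b
        \<and> real (snd (build_buffer G F b a)) \<le> C_build * real n
        \<and> (\<forall>B. is_buffer G b a B \<longrightarrow>
              (\<forall>k l. k \<le> l \<and> l < n \<longrightarrow>
                  fst (bb_query G F b a B k l) = G (seg a k (Suc l))
                \<and> real (snd (bb_query G F b a B k l)) \<le> C_query * (real n / real b + real b))
            \<and> (\<forall>k x. k < n \<longrightarrow>
                  is_buffer G b (a[k := x]) (fst (bb_update G F b a B k x))
                \<and> real (snd (bb_update G F b a B k x)) \<le> C_upd * real b)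
            \<and> (linear_rq G \<longrightarrow> (\<forall>k x. k < n \<longrightarrow>
                  is_buffer G b (a[k := x]) (fst (bb_lin_update G F b a B k x))
                \<and> real (snd (bb_lin_update G F b a B k x)) \<le> C_lin))))
   \<and> (\<forall>(n::nat) (s::nat). 0 < s \<and> n = s ^ 2 \<longrightarrow>
        (\<forall>b::nat. 0 < b \<longrightarrow> real n / real s + real s \<le> real n / real b + real b)
      \<and> real n / real s + real s = 2 * sqrt (real n)
      \<and> (\<forall>(G :: real list \<Rightarrow> real ^ 'm) F a B k l.
           distributive_rq G F \<and> length a = n \<and> is_buffer G s a B \<and> k \<le> l \<and> l < n \<longrightarrow>
             real (snd (bb_query G F s a B k l)) \<le> C_sqrt * sqrt (real n)))"
proof (rule exI[of _ 2], rule exI[of _ 5], rule exI[of _ 2], rule exI[of _ 4], rule exI[of _ 10],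
    intro conjI allI impI; clarify)
  have square: "real (s\<^sup>2) / real s = real s" if "0 < s" for s :: nat
    using that by (simp add: power2_eq_square)
  show "real (snd (bb_query G F b a B k l)) \<le> 5 * (real (length a) / real b + real b)"
    if "0 < b" "l < length a" for G F b a B k l
    using that by (rule real_snd_bb_query_le)
  show "real (snd (bb_query G F s a B k l)) \<le> 10 * sqrt (real (s\<^sup>2))"
    if "0 < s" "length a = s\<^sup>2" "l < s\<^sup>2" for G F s a B k l
    using real_snd_bb_query_le[of s l a G F B k] that square[OF \<open>0 < s\<close>] by simp
  show "real (s\<^sup>2) / real s + real s \<le> real (s\<^sup>2) / real b + real b"
    if "0 < s" "0 < b" for s b :: nat
    using two_mult_le_power2_divide_add[where x = "real s" and y = "real b"] that square[OF \<open>0 < s\<close>]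
    by simp
  show "real (s\<^sup>2) / real s + real s = 2 * sqrt (real (s\<^sup>2))" if "0 < s" for s :: nat
    using square[OF that] by simp
  show "real (snd (build_buffer G F b a)) \<le> 2 * real (length a)" for G F b a
    using snd_build_buffer_le[of G F b a] by (simp add: of_nat_le_iff[symmetric])
  show "real (snd (bb_update G F b a B k x)) \<le> 2 * real b" for G F b a B k x
    using snd_bb_update_le[of G F b a B k x] by (simp add: of_nat_le_iff[symmetric])
qed (auto simp: fst_build_buffer length_build_buffer fst_bb_query fst_bb_update fst_bb_lin_update
      snd_bb_lin_update_le)

end
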